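(* Let $1<q\le2$ and $n/q'<s<n/q'+1$. Let $\psi^{(1)},\psi^{(2)}\in C_c^\infty(\mathbb{R}^n)$ with $\operatorname{supp}\psi^{(j)}\subset\{x:|x|\le R\}$ for some $R>0$ ($j=1,2$), and set $\psi=\psi^{(1)}*\psi^{(2)}$. Then there is a constant $C_\psi>0$ such that for all $\vartheta\in\mathbb{R}^n$, $$\big\|\langle\cdot\rangle^s\big(\hat\psi(\cdot-\vartheta)-\hat\psi(\cdot)\big)\big\|_{L^q(\mathbb{R}^n)}\le C_\psi\Big(|\vartheta|^{s-\frac{n}{q'}}\Big(\max_{t\in\mathbb{R}^n,|t|\le R}|e^{i\vartheta\cdot t}-1|\Big)^{1-(s-\frac{n}{q'})}+|\vartheta|^s\Big).$$
   Context: $q'$ is the conjugate exponent of $q$; $\langle\xi\rangle=(1+|\xi|^2)^{1/2}$; $\hat f(\xi)=\int f(x)e^{-ix\cdot\xi}dx$; $(f*g)(x)=\int f(x-y)g(y)dy$. *)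

theory Defs
  imports "HOL-Analysis.Analysis"
begin

inductive_set iter_partials :: "('a::euclidean_space \<Rightarrow> 'b::real_normed_vector) \<Rightarrow> ('a \<Rightarrow> 'b) set"
  for f where
  base: "f \<in> iter_partials f"
| step: "g \<in> iter_partials f \<Longrightarrow> b \<in> Basis \<Longrightarrow>
          (\<lambda>x. frechet_derivative g (at x) b) \<in> iter_partials f"

definition smooth_fun :: "('a::euclidean_space \<Rightarrow> 'b::real_normed_vector) \<Rightarrow> bool" where
  "smooth_fun f \<longleftrightarrow> (\<forall>g\<in>iter_partials f. \<forall>x. g differentiable (at x))"

definition fourier :: "('a::euclidean_space \<Rightarrow> complex) \<Rightarrow> 'a \<Rightarrow> complex" where
  "fourier f \<xi> = (LINT x|lborel. f x * cis (- (x \<bullet> \<xi>)))"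

definition conv :: "('a::euclidean_space \<Rightarrow> complex) \<Rightarrow> ('a \<Rightarrow> complex) \<Rightarrow> 'a \<Rightarrow> complex" where
  "conv f g x = (LINT y|lborel. f (x - y) * g y)"

definition jbr :: "'a::real_normed_vector \<Rightarrow> real" where
  "jbr \<xi> = sqrt (1 + (norm \<xi>)\<^sup>2)"

definition Lq_norm :: "real \<Rightarrow> ('a::euclidean_space \<Rightarrow> 'b::real_normed_vector) \<Rightarrow> ennreal" where
  "Lq_norm q f = (let I = (\<integral>\<^sup>+ x. ennreal (norm (f x) powr q) \<partial>lborel)
                  in if I = \<infinity> then \<infinity> else ennreal (enn2real I powr (1 / q)))"

end

theory Submission
  imports Defs "HOL-Probability.Characteristic_Functions" "HOL-Probability.Sinc_Integral"
begin

text \<open>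
  The estimate follows from the cruder bound
  \<open>\<parallel>\<langle>\<cdot>\<rangle>\<^sup>s (\<psi>^(\<cdot> - \<theta>) - \<psi>^)\<parallel>\<^sub>q \<le> K min (|\<theta>|, 1) \<langle>\<theta>\<rangle>\<^sup>s\<close>.
  By the convolution theorem \<open>\<psi>^ = \<psi>\<^sub>1^ \<psi>\<^sub>2^\<close>. Each factor decays faster than any power
  of \<open>\<langle>\<xi>\<rangle>\<close>, because the Fourier transform turns \<open>\<partial>\<^sub>b\<close> into multiplication by \<open>i b\<cdot>\<xi>\<close>,
  and is Lipschitz with constant \<open>R \<parallel>\<psi>\<^sub>j\<parallel>\<^sub>1\<close>. Hence \<open>|\<psi>^(\<xi> - \<theta>) - \<psi>^(\<xi>)|\<close> is at most a
  multiple of \<open>min (|\<theta>|, 1) (\<langle>\<xi> - \<theta>\<rangle>\<^sup>-\<^sup>N + \<langle>\<xi>\<rangle>\<^sup>-\<^sup>N)\<close>; Peetre's inequality trades the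
  weight \<open>\<langle>\<xi>\<rangle>\<^sup>s\<close> for \<open>\<langle>\<theta>\<rangle>\<^sup>s\<close>, and the remaining weights are \<open>q\<close>-integrable uniformly
  in \<open>\<theta>\<close> by translation invariance. Finally \<open>min (|\<theta>|, 1) \<langle>\<theta>\<rangle>\<^sup>s\<close> is dominated by the
  right-hand side: by \<open>|\<theta>|\<^sup>s\<close> when \<open>|\<theta>| \<ge> 1\<close>, and when \<open>|\<theta>| < 1\<close> because the supremum
  is at least \<open>min (R, 1) |\<theta>| / 2\<close>, so that \<open>|\<theta>|\<^sup>a sup\<^sup>1\<^sup>-\<^sup>a\<close> is at least a multiple
  of \<open>|\<theta>|\<close>, where \<open>a = s - n/q'\<close>.
\<close>

lemma norm_cis_minus_one_le: "cmod (cis a - 1) \<le> \<bar>a\<bar>"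
  using iexp_approx1[of a 0] by (simp add: cis_conv_exp)

lemma norm_cis_minus_one_ge:
  assumes "\<bar>a\<bar> \<le> 1"
  shows "\<bar>a\<bar> / 2 \<le> cmod (cis a - 1)"
proof -
  have "cmod (cis a - 1 - \<i> * a) \<le> a\<^sup>2 / 2"
    using iexp_approx1[of a 1] by (simp add: cis_conv_exp power2_eq_square diff_diff_eq)
  moreover have "a\<^sup>2 \<le> \<bar>a\<bar>"
    using mult_right_mono[OF assms abs_ge_zero[of a]] by (simp add: power2_eq_square)
  moreover have "\<bar>a\<bar> \<le> cmod (cis a - 1) + cmod (cis a - 1 - \<i> * a)"
    using norm_triangle_ineq4[of "cis a - 1" "cis a - 1 - \<i> * a"] by (simp add: norm_mult)
  ultimately show ?thesis by linarith
qed

lemma jbr_ge_1: "1 \<le> jbr \<xi>"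
  by (simp add: jbr_def)

lemma jbr_powr: "jbr \<xi> powr s = (1 + (norm \<xi>)\<^sup>2) powr (s / 2)"
  by (simp add: jbr_def powr_half_sqrt[symmetric] powr_powr add_pos_nonneg)

lemma jbr_powr_even: "jbr \<xi> powr (2 * real m) = (1 + (norm \<xi>)\<^sup>2) ^ m"
  by (simp add: jbr_powr powr_realpow add_pos_nonneg)

lemma borel_measurable_jbr [measurable]: "jbr \<in> borel_measurable borel"
  unfolding jbr_def by measurable

lemma jbr_powr_le_norm_powr:
  assumes "1 \<le> norm \<xi>" and "0 \<le> s"
  shows "jbr \<xi> powr s \<le> 2 powr (s / 2) * norm \<xi> powr s"
proof -
  have "jbr \<xi> powr s \<le> (2 * (norm \<xi>)\<^sup>2) powr (s / 2)"
    unfolding jbr_powr using assms one_le_power[of "norm \<xi>" 2] by (intro powr_mono2) auto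
  also have "\<dots> = 2 powr (s / 2) * ((norm \<xi>) powr 2) powr (s / 2)"
    using assms by (simp add: powr_mult powr_numeral)
  also have "\<dots> = 2 powr (s / 2) * norm \<xi> powr s"
    by (simp only: powr_powr) simp
  finally show ?thesis .
qed

lemma Peetre_inequality:
  fixes \<xi> \<theta> :: "'a::real_normed_vector"
  assumes "0 \<le> s"
  shows "jbr \<xi> powr s \<le> 2 powr (s / 2) * jbr \<theta> powr s * jbr (\<xi> - \<theta>) powr s"
proof -
  have "norm \<xi> \<le> norm \<theta> + norm (\<xi> - \<theta>)"
    using norm_triangle_ineq[of \<theta> "\<xi> - \<theta>"] by simp
  then have "(norm \<xi>)\<^sup>2 \<le> (norm \<theta> + norm (\<xi> - \<theta>))\<^sup>2"
    by (simp add: power_mono)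
  also have "\<dots> \<le> 2 * (norm \<theta>)\<^sup>2 + 2 * (norm (\<xi> - \<theta>))\<^sup>2"
    using sum_squares_ge_zero[of "norm \<theta> - norm (\<xi> - \<theta>)" 0]
    by (simp add: power2_eq_square algebra_simps)
  finally have "(norm \<xi>)\<^sup>2 \<le> 2 * (norm \<theta>)\<^sup>2 + 2 * (norm (\<xi> - \<theta>))\<^sup>2" .
  moreover have "2 * (1 + (norm \<theta>)\<^sup>2) * (1 + (norm (\<xi> - \<theta>))\<^sup>2)
      = 2 + 2 * (norm \<theta>)\<^sup>2 + 2 * (norm (\<xi> - \<theta>))\<^sup>2 + 2 * ((norm \<theta>)\<^sup>2 * (norm (\<xi> - \<theta>))\<^sup>2)"
    by (simp add: algebra_simps)
  moreover have "0 \<le> (norm \<theta>)\<^sup>2 * (norm (\<xi> - \<theta>))\<^sup>2"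
    by simp
  ultimately have "1 + (norm \<xi>)\<^sup>2 \<le> 2 * (1 + (norm \<theta>)\<^sup>2) * (1 + (norm (\<xi> - \<theta>))\<^sup>2)"
    by linarith
  then have "(1 + (norm \<xi>)\<^sup>2) powr (s / 2) \<le> (2 * (1 + (norm \<theta>)\<^sup>2) * (1 + (norm (\<xi> - \<theta>))\<^sup>2)) powr (s / 2)"
    using assms by (intro powr_mono2) auto
  then show ?thesis
    using powr_mult[of "2 * (1 + (norm \<theta>)\<^sup>2)" "1 + (norm (\<xi> - \<theta>))\<^sup>2" "s / 2"]
      powr_mult[of 2 "1 + (norm \<theta>)\<^sup>2" "s / 2"]
    by (simp add: jbr_powr)
qed

lemma jbr_powr_mult_translated_weights_le:
  fixes \<xi> \<theta> :: "'a::real_normed_vector"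
  assumes "0 \<le> s"
  shows "jbr \<xi> powr s * (jbr (\<xi> - \<theta>) powr (- p) + jbr \<xi> powr (- p))
    \<le> 2 powr (s / 2) * jbr \<theta> powr s * (jbr (\<xi> - \<theta>) powr (s - p) + jbr \<xi> powr (s - p))"
proof -
  have "1 \<le> 2 powr (s / 2) * jbr \<theta> powr s"
    using mult_mono[OF ge_one_powr_ge_zero ge_one_powr_ge_zero[OF jbr_ge_1[of \<theta>]]] assms by simp
  then have "jbr \<xi> powr (s - p) \<le> 2 powr (s / 2) * jbr \<theta> powr s * jbr \<xi> powr (s - p)"
    using mult_right_mono[of 1 _ "jbr \<xi> powr (s - p)"] by simp
  moreover have "jbr \<xi> powr s * jbr (\<xi> - \<theta>) powr (- p)
      \<le> 2 powr (s / 2) * jbr \<theta> powr s * jbr (\<xi> - \<theta>) powr (s - p)"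
    using mult_right_mono[OF Peetre_inequality[OF assms, of \<xi> \<theta>], of "jbr (\<xi> - \<theta>) powr (- p)"]
      jbr_ge_1[of "\<xi> - \<theta>"]
    by (simp add: mult.assoc powr_add[symmetric])
  moreover have "jbr \<xi> powr s * (jbr (\<xi> - \<theta>) powr (- p) + jbr \<xi> powr (- p))
      = jbr \<xi> powr s * jbr (\<xi> - \<theta>) powr (- p) + jbr \<xi> powr (s - p)"
    by (simp add: distrib_left powr_add[symmetric])
  ultimately show ?thesis
    by (simp add: distrib_left)
qed

lemma powr_add_le:
  fixes u v q :: real
  assumes "0 \<le> u" and "0 \<le> v" and "0 < q"
  shows "(u + v) powr q \<le> 2 powr q * (u powr q + v powr q)"
proof -
  have "(u + v) powr q \<le> (2 * max u v) powr q"
    using assms by (intro powr_mono2) auto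
  also have "\<dots> = 2 powr q * max u v powr q"
    using assms by (simp add: powr_mult)
  also have "\<dots> \<le> 2 powr q * (u powr q + v powr q)"
    by (intro mult_left_mono) (auto simp: max_def)
  finally show ?thesis .
qed

lemma one_plus_sum_power_le:
  fixes y :: "'i \<Rightarrow> real"
  assumes "finite I" and nonneg: "\<And>i. i \<in> I \<Longrightarrow> 0 \<le> y i"
  shows "(1 + sum y I) ^ m \<le> (real (card I) + 1) ^ m * (1 + (\<Sum>i\<in>I. y i ^ m))"
proof -
  define Y where "Y = Max (insert 1 (y ` I))"
  have "1 \<le> Y" and le_Y: "\<And>i. i \<in> I \<Longrightarrow> y i \<le> Y"
    using \<open>finite I\<close> by (auto simp: Y_def intro: Max_ge)
  have "Y ^ m \<le> 1 + (\<Sum>i\<in>I. y i ^ m)"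
  proof -
    have "Y \<in> insert 1 (y ` I)" unfolding Y_def using \<open>finite I\<close> by (intro Max_in) auto
    then show ?thesis
      using \<open>finite I\<close> nonneg member_le_sum[of _ I "\<lambda>i. y i ^ m"] sum_nonneg[of I "\<lambda>i. y i ^ m"]
      by (fastforce simp: zero_le_power)
  qed
  have "1 + sum y I \<le> (real (card I) + 1) * Y"
    using sum_bounded_above[of I y Y] le_Y \<open>1 \<le> Y\<close> by (simp add: algebra_simps)
  then have "(1 + sum y I) ^ m \<le> (real (card I) + 1) ^ m * Y ^ m"
    using nonneg sum_nonneg[of I y] by (simp add: power_mult_distrib[symmetric] power_mono)
  also have "\<dots> \<le> (real (card I) + 1) ^ m * (1 + (\<Sum>i\<in>I. y i ^ m))"
    using \<open>Y ^ m \<le> _\<close> by (intro mult_left_mono) auto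
  finally show ?thesis .
qed

section \<open>Fourier transforms of compactly supported functions\<close>

lemma lborel_integral_translate:
  fixes f :: "'a::euclidean_space \<Rightarrow> 'b::{banach,second_countable_topology}"
  assumes [measurable]: "f \<in> borel_measurable borel"
  shows "(\<integral>x. f (a + x) \<partial>lborel) = (\<integral>x. f x \<partial>lborel)"
  by (subst lborel_distr_plus[symmetric, of a]) (simp add: integral_distr)

lemma lborel_nn_integral_translate:
  fixes f :: "'a::euclidean_space \<Rightarrow> ennreal"
  assumes [measurable]: "f \<in> borel_measurable borel"
  shows "(\<integral>\<^sup>+x. f (a + x) \<partial>lborel) = (\<integral>\<^sup>+x. f x \<partial>lborel)"
  by (subst lborel_distr_plus[symmetric, of a]) (simp add: nn_integral_distr)

lemma integrable_compact_support:
  fixes h :: "'a::euclidean_space \<Rightarrow> 'b::{banach,second_countable_topology}"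
  assumes "continuous_on UNIV h" and "\<And>x. r < norm x \<Longrightarrow> h x = 0"
  shows "integrable lborel h"
proof -
  have "integrable lborel (\<lambda>x. indicator (cball 0 r) x *\<^sub>R h x)"
    by (rule borel_integrable_compact) (auto intro: continuous_on_subset[OF assms(1)])
  moreover have "(\<lambda>x. indicator (cball 0 r) x *\<^sub>R h x) = h"
    using assms(2) by (auto simp: indicator_def fun_eq_iff not_le)
  ultimately show ?thesis by simp
qed

lemma bounded_compact_support:
  fixes h :: "'a::euclidean_space \<Rightarrow> 'b::real_normed_vector"
  assumes "continuous_on UNIV h" and "\<And>x. r < norm x \<Longrightarrow> h x = 0"
  obtains M where "M \<ge> 0" and "\<And>x. norm (h x) \<le> M"
proof -
  have "compact (h ` cball 0 r)"
    by (rule compact_continuous_image) (auto intro: continuous_on_subset[OF assms(1)])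
  then obtain M where M: "\<And>y. y \<in> h ` cball 0 r \<Longrightarrow> norm y \<le> M"
    using compact_imp_bounded bounded_iff by metis
  show ?thesis
  proof (rule that[of "max M 0"])
    show "norm (h x) \<le> max M 0" for x
      using M[of "h x"] assms(2)[of x] by (cases "norm x \<le> r") auto
  qed simp
qed

lemma norm_fourier_le: "norm (fourier g \<xi>) \<le> (\<integral>x. norm (g x) \<partial>lborel)"
proof -
  have "norm (fourier g \<xi>) \<le> (\<integral>x. norm (g x * cis (- (x \<bullet> \<xi>))) \<partial>lborel)"
    unfolding fourier_def by (rule integral_norm_bound)
  then show ?thesis by (simp add: norm_mult)
qed

lemma fourier_translate:
  fixes g :: "'a::euclidean_space \<Rightarrow> complex"
  assumes [measurable]: "g \<in> borel_measurable borel"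
  shows "fourier (\<lambda>x. g (x + a)) \<xi> = cis (a \<bullet> \<xi>) * fourier g \<xi>"
proof -
  have "fourier (\<lambda>x. g (x + a)) \<xi> = (\<integral>x. (\<lambda>y. g y * cis (- ((y - a) \<bullet> \<xi>))) (a + x) \<partial>lborel)"
    by (simp add: fourier_def add.commute)
  also have "\<dots> = (\<integral>y. g y * cis (- ((y - a) \<bullet> \<xi>)) \<partial>lborel)"
    by (rule lborel_integral_translate)
      (intro borel_measurable_times assms borel_measurable_continuous_onI continuous_intros)
  also have "\<dots> = (\<integral>y. cis (a \<bullet> \<xi>) * (g y * cis (- (y \<bullet> \<xi>))) \<partial>lborel)"
    by (simp add: inner_diff_left cis_mult algebra_simps)
  finally show ?thesis by (simp add: fourier_def)
qed

lemma fourier_translate_diff: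
  fixes g :: "'a::euclidean_space \<Rightarrow> complex"
  assumes cont: "continuous_on UNIV g" and supp: "\<And>x. R < norm x \<Longrightarrow> g x = 0"
  shows "fourier (\<lambda>x. g (x + a) - g x) \<xi> = (cis (a \<bullet> \<xi>) - 1) * fourier g \<xi>"
proof -
  have int: "integrable lborel (\<lambda>x. g x * cis (- (x \<bullet> \<xi>)))"
    by (rule integrable_compact_support[where r=R]) (auto intro!: continuous_intros cont simp: supp)
  have "integrable lborel (\<lambda>x. g (x + a) * cis (- (x \<bullet> \<xi>)))"
  proof (rule integrable_compact_support[where r="R + norm a"])
    show "continuous_on UNIV (\<lambda>x. g (x + a) * cis (- (x \<bullet> \<xi>)))"
      by (intro continuous_intros continuous_on_compose2[OF cont]) auto
    show "g (x + a) * cis (- (x \<bullet> \<xi>)) = 0" if "R + norm a < norm x" for x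
      using that norm_triangle_ineq2[of x "- a"] by (simp add: supp)
  qed
  then have "fourier (\<lambda>x. g (x + a) - g x) \<xi> = fourier (\<lambda>x. g (x + a)) \<xi> - fourier g \<xi>"
    using int by (simp add: fourier_def left_diff_distrib)
  also have "\<dots> = (cis (a \<bullet> \<xi>) - 1) * fourier g \<xi>"
    using cont by (simp add: fourier_translate borel_measurable_continuous_onI left_diff_distrib)
  finally show ?thesis .
qed

lemma norm_fourier_translate_diff_le:
  fixes g :: "'a::euclidean_space \<Rightarrow> complex"
  assumes cont: "continuous_on UNIV g" and supp: "\<And>x. R < norm x \<Longrightarrow> g x = 0" and "R \<ge> 0"
  shows "norm (fourier g (\<xi> - \<theta>) - fourier g \<xi>) \<le> R * norm \<theta> * (\<integral>x. norm (g x) \<partial>lborel)"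
proof -
  have int: "integrable lborel (\<lambda>x. g x * cis (- (x \<bullet> \<eta>)))" for \<eta>
    by (rule integrable_compact_support[where r=R]) (auto intro!: continuous_intros cont simp: supp)
  have int_norm: "integrable lborel (\<lambda>x. norm (g x))"
    by (rule integrable_compact_support[where r=R]) (auto intro!: continuous_intros cont simp: supp)
  have pointwise: "norm (g x * cis (- (x \<bullet> (\<xi> - \<theta>))) - g x * cis (- (x \<bullet> \<xi>)))
      \<le> norm (g x) * (R * norm \<theta>)" for x
  proof (cases "norm x \<le> R")
    case True
    have "g x * cis (- (x \<bullet> (\<xi> - \<theta>))) - g x * cis (- (x \<bullet> \<xi>))
        = g x * cis (- (x \<bullet> \<xi>)) * (cis (x \<bullet> \<theta>) - 1)"
      using cis_mult[of "x \<bullet> \<theta>" "- (x \<bullet> \<xi>)"] by (simp add: inner_diff_right algebra_simps)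
    moreover have "cmod (cis (x \<bullet> \<theta>) - 1) \<le> R * norm \<theta>"
      using norm_cis_minus_one_le[of "x \<bullet> \<theta>"] Cauchy_Schwarz_ineq2[of x \<theta>]
        mult_right_mono[OF True norm_ge_zero[of \<theta>]] by linarith
    ultimately show ?thesis by (simp add: norm_mult mult_left_mono)
  qed (simp add: supp)
  have "norm (fourier g (\<xi> - \<theta>) - fourier g \<xi>)
      = norm (\<integral>x. g x * cis (- (x \<bullet> (\<xi> - \<theta>))) - g x * cis (- (x \<bullet> \<xi>)) \<partial>lborel)"
    unfolding fourier_def using int by simp
  also have "\<dots> \<le> (\<integral>x. norm (g x) * (R * norm \<theta>) \<partial>lborel)"
    using int int_norm pointwise by (intro Bochner_Integration.integral_norm_bound_integral) auto
  finally show ?thesis by (simp add: mult.commute)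
qed

lemma fourier_conv:
  fixes f g :: "'a::euclidean_space \<Rightarrow> complex"
  assumes cf: "continuous_on UNIV f" and cg: "continuous_on UNIV g"
    and sf: "\<And>x. R < norm x \<Longrightarrow> f x = 0" and sg: "\<And>x. R < norm x \<Longrightarrow> g x = 0"
  shows "fourier (conv f g) \<xi> = fourier f \<xi> * fourier g \<xi>"
proof -
  define e where "e x = cis (- (x \<bullet> \<xi>))" for x :: 'a
  define F where "F x y = f (x - y) * g y * e x" for x y
  have [measurable]: "f \<in> borel_measurable borel" "g \<in> borel_measurable borel"
    using cf cg by (auto intro: borel_measurable_continuous_onI)
  have int: "integrable (lborel \<Otimes>\<^sub>M lborel) (case_prod F)"
    unfolding lborel_prod
  proof (rule integrable_compact_support[where r="3 * R"])
    show "continuous_on UNIV (case_prod F)"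
      unfolding F_def e_def split_beta
      by (intro continuous_intros continuous_on_compose2[OF cf] continuous_on_compose2[OF cg]) auto
    fix p :: "'a \<times> 'a" assume p: "3 * R < norm p"
    obtain x y where xy: "p = (x, y)" by (cases p)
    have "norm x + norm y > 3 * R" using p norm_Pair_le[of x y] xy by simp
    moreover have "norm x \<le> norm (x - y) + norm y" using norm_triangle_ineq[of "x - y" y] by simp
    ultimately have "R < norm (x - y) \<or> R < norm y" by linarith
    then show "case_prod F p = 0" using xy sf sg by (auto simp: F_def)
  qed
  have "fourier (conv f g) \<xi> = (\<integral>x. (\<integral>y. F x y \<partial>lborel) \<partial>lborel)"
    by (simp add: fourier_def conv_def F_def e_def)
  also have "\<dots> = (\<integral>y. (\<integral>x. F x y \<partial>lborel) \<partial>lborel)"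
    by (rule lborel_pair.Fubini_integral[symmetric, OF int])
  also have "\<dots> = (\<integral>y. fourier f \<xi> * (g y * cis (- (y \<bullet> \<xi>))) \<partial>lborel)"
  proof (rule Bochner_Integration.integral_cong[OF refl])
    fix y
    have "(\<integral>x. F x y \<partial>lborel) = g y * fourier (\<lambda>x. f (x + - y)) \<xi>"
      unfolding F_def e_def fourier_def by (subst integral_mult_right_zero[symmetric]) (simp add: algebra_simps)
    also have "\<dots> = g y * (cis (- (y \<bullet> \<xi>)) * fourier f \<xi>)"
      using fourier_translate[of f "- y" \<xi>] by simp
    finally show "(\<integral>x. F x y \<partial>lborel) = fourier f \<xi> * (g y * cis (- (y \<bullet> \<xi>)))"
      by (simp only: ac_simps)
  qed
  also have "\<dots> = fourier f \<xi> * fourier g \<xi>"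
    by (simp add: fourier_def)
  finally show ?thesis .
qed

section \<open>Decay of Fourier transforms of smooth functions\<close>

lemma filterlim_scaleR_inverse_Suc_at_0:
  fixes v :: "'a::real_normed_vector"
  assumes "v \<noteq> 0"
  shows "filterlim (\<lambda>k. inverse (real (Suc k)) *\<^sub>R v) (at 0) sequentially"
  unfolding filterlim_at
proof
  show "\<forall>\<^sub>F k in sequentially. inverse (real (Suc k)) *\<^sub>R v \<in> UNIV \<and> inverse (real (Suc k)) *\<^sub>R v \<noteq> 0"
    using assms by simp
  show "(\<lambda>k. inverse (real (Suc k)) *\<^sub>R v) \<longlonglongrightarrow> 0"
    using tendsto_scaleR[OF LIMSEQ_inverse_real_of_nat tendsto_const[of v]] by simp
qed

lemma difference_quotient_tendsto:
  fixes g :: "'a::real_normed_vector \<Rightarrow> 'b::real_normed_vector"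
  assumes "(g has_derivative D) (at x)"
  shows "(\<lambda>k. real (Suc k) *\<^sub>R (g (x + inverse (real (Suc k)) *\<^sub>R b) - g x)) \<longlonglongrightarrow> D b"
proof -
  define \<tau> where "\<tau> k = inverse (real (Suc k))" for k
  have "(g has_derivative D) (at (x + 0 *\<^sub>R b))"
    using assms by simp
  then have "((\<lambda>t. g (x + t *\<^sub>R b)) has_derivative (\<lambda>t. D (t *\<^sub>R b))) (at 0)"
    by (rule has_derivative_compose[rotated]) (auto intro!: derivative_eq_intros)
  moreover have "D (t *\<^sub>R b) = t *\<^sub>R D b" for t
    using has_derivative_bounded_linear[OF assms] by (simp add: bounded_linear.linear linear_cmul)
  ultimately have "((\<lambda>t. norm (g (x + t *\<^sub>R b) - g x - t *\<^sub>R D b) / norm t) \<longlongrightarrow> 0) (at 0)"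
    by (simp add: has_derivative_at)
  from filterlim_compose[OF this filterlim_scaleR_inverse_Suc_at_0[of "1::real"]]
  have "(\<lambda>k. norm (g (x + \<tau> k *\<^sub>R b) - g x - \<tau> k *\<^sub>R D b) / \<tau> k) \<longlonglongrightarrow> 0"
    by (simp add: \<tau>_def o_def)
  moreover have "norm (g (x + \<tau> k *\<^sub>R b) - g x - \<tau> k *\<^sub>R D b) / \<tau> k
      = norm (real (Suc k) *\<^sub>R (g (x + \<tau> k *\<^sub>R b) - g x) - D b)" for k
  proof -
    have "real (Suc k) *\<^sub>R (g (x + \<tau> k *\<^sub>R b) - g x - \<tau> k *\<^sub>R D b)
        = real (Suc k) *\<^sub>R (g (x + \<tau> k *\<^sub>R b) - g x) - D b"
      by (simp add: \<tau>_def scaleR_diff_right)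
    then show ?thesis
      by (metis \<tau>_def divide_inverse_commute inverse_inverse_eq norm_scaleR of_nat_0_le_iff
          abs_of_nonneg mult.commute)
  qed
  ultimately show ?thesis
    by (simp add: \<tau>_def tendsto_norm_zero_iff LIM_zero_iff)
qed

lemma cis_difference_quotient_tendsto:
  "(\<lambda>k. complex_of_real (real (Suc k)) * (cis (inverse (real (Suc k)) * c) - 1)) \<longlonglongrightarrow> \<i> * c"
proof -
  have "((\<lambda>z. exp (\<i> * c * z)) has_field_derivative \<i> * c) (at 0)"
    by (auto intro!: derivative_eq_intros)
  then have "((\<lambda>z. (exp (\<i> * c * z) - exp (\<i> * c * 0)) / (z - 0)) \<longlongrightarrow> \<i> * c) (at 0)"
    by (simp add: DERIV_def)
  from filterlim_compose[OF this filterlim_scaleR_inverse_Suc_at_0[of "1::complex"]]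
  show ?thesis
    by (simp add: cis_conv_exp divide_inverse mult.commute mult.left_commute scaleR_conv_of_real mult.assoc)
qed

lemma norm_translate_diff_le:
  fixes g :: "'a::real_normed_vector \<Rightarrow> 'b::real_normed_vector"
  assumes diff: "\<And>x. g differentiable (at x)"
    and bound: "\<And>x. norm (frechet_derivative g (at x) b) \<le> M" and "0 \<le> t"
  shows "norm (g (x + t *\<^sub>R b) - g x) \<le> M * t"
proof -
  have deriv: "(g has_derivative frechet_derivative g (at y)) (at y)" for y
    using diff frechet_derivative_works by blast
  have lin: "frechet_derivative g (at y) (h *\<^sub>R b) = h *\<^sub>R frechet_derivative g (at y) b" for y h
    using has_derivative_bounded_linear[OF deriv[of y]] by (simp add: bounded_linear.linear linear_cmul)
  have "((\<lambda>u. g (x + u *\<^sub>R b)) has_derivative (\<lambda>h. frechet_derivative g (at (x + u *\<^sub>R b)) (h *\<^sub>R b)))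
      (at u within {0..t})" for u
    by (rule has_derivative_compose[OF _ deriv]) (auto intro!: derivative_eq_intros)
  then have "norm (g (x + t *\<^sub>R b) - g (x + 0 *\<^sub>R b)) \<le> M * norm (t - 0)"
  proof (rule differentiable_bound[OF convex_real_interval(5)])
    show "onorm (\<lambda>h. frechet_derivative g (at (x + u *\<^sub>R b)) (h *\<^sub>R b)) \<le> M" for u
      using bound[of "x + u *\<^sub>R b"] by (intro onorm_le) (simp add: lin mult.commute[of M] mult_left_mono)
  qed (use \<open>0 \<le> t\<close> in auto)
  then show ?thesis using \<open>0 \<le> t\<close> by simp
qed

lemma norm_difference_quotient_le_indicator:
  fixes g :: "'a::real_normed_vector \<Rightarrow> 'b::real_normed_vector"
  assumes diff: "\<And>x. g differentiable (at x)"
    and bound: "\<And>x. norm (frechet_derivative g (at x) b) \<le> M"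
    and supp: "\<And>x. R < norm x \<Longrightarrow> g x = 0" and "0 < t" and "t \<le> 1"
  shows "norm ((g (x + t *\<^sub>R b) - g x) /\<^sub>R t) \<le> M * indicator (cball 0 (R + norm b)) x"
proof (cases "norm x \<le> R + norm b")
  case True
  have "norm ((g (x + t *\<^sub>R b) - g x) /\<^sub>R t) = norm (g (x + t *\<^sub>R b) - g x) / t"
    using \<open>0 < t\<close> by (simp add: divide_inverse_commute)
  also have "\<dots> \<le> M"
    using norm_translate_diff_le[OF diff bound, of t x] \<open>0 < t\<close> by (simp add: pos_divide_le_eq)
  finally show ?thesis
    using True by simp
next
  case False
  then have "R < norm (x + t *\<^sub>R b)"
    using norm_triangle_ineq2[of x "- (t *\<^sub>R b)"] mult_right_mono[OF \<open>t \<le> 1\<close> norm_ge_zero[of b]]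
      \<open>0 < t\<close> by simp
  moreover have "R < norm x"
    using False norm_ge_zero[of b] by linarith
  ultimately show ?thesis
    using False by (simp add: supp)
qed

lemma fourier_directional_derivative:
  fixes g :: "'a::euclidean_space \<Rightarrow> complex"
  assumes diff: "\<And>x. g differentiable (at x)"
    and cont: "continuous_on UNIV (\<lambda>x. frechet_derivative g (at x) b)"
    and supp: "\<And>x. R < norm x \<Longrightarrow> g x = 0"
    and supp': "\<And>x. R < norm x \<Longrightarrow> frechet_derivative g (at x) b = 0"
  shows "fourier (\<lambda>x. frechet_derivative g (at x) b) \<xi> = \<i> * of_real (b \<bullet> \<xi>) * fourier g \<xi>"
proof -
  \<comment> \<open>The difference quotients \<open>Q k\<close> with step \<open>1/(k+1)\<close> converge to the integrand, are dominated
    by the mean value bound, and their integrals are \<open>(k+1) (cis (b\<cdot>\<xi>/(k+1)) - 1)\<close> times \<open>fourier g \<xi>\<close>.\<close>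
  define G where "G x = frechet_derivative g (at x) b" for x
  define e where "e x = cis (- (x \<bullet> \<xi>))" for x
  define \<tau> where "\<tau> k = inverse (real (Suc k))" for k
  define Q where "Q k x = of_real (real (Suc k)) * (g (x + \<tau> k *\<^sub>R b) - g x) * e x" for k x
  have cont_g: "continuous_on UNIV g"
    using diff differentiable_imp_continuous_within continuous_at_imp_continuous_on by blast
  obtain M where "M \<ge> 0" and M: "\<And>x. norm (G x) \<le> M"
    using bounded_compact_support[OF cont supp'] unfolding G_def by metis
  have "(\<lambda>k. Q k x) \<longlonglongrightarrow> G x * e x" for x
    using tendsto_mult[OF difference_quotient_tendsto[OF diff[of x, unfolded frechet_derivative_works], of b]
        tendsto_const[of "e x"]]
    by (simp add: Q_def G_def \<tau>_def scaleR_conv_of_real)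
  moreover have "norm (Q k x) \<le> M * indicator (cball 0 (R + norm b)) x" for k x
  proof -
    have "norm (Q k x) = norm ((g (x + \<tau> k *\<^sub>R b) - g x) /\<^sub>R \<tau> k)"
      unfolding Q_def e_def norm_mult norm_of_real by (simp add: \<tau>_def)
    also have "\<dots> \<le> M * indicator (cball 0 (R + norm b)) x"
      using M[unfolded G_def] by (intro norm_difference_quotient_le_indicator diff supp) (auto simp: \<tau>_def field_simps)
    finally show ?thesis .
  qed
  ultimately have "(\<lambda>k. \<integral>x. Q k x \<partial>lborel) \<longlonglongrightarrow> (\<integral>x. G x * e x \<partial>lborel)"
    by (intro integral_dominated_convergence[where w="\<lambda>x. M * indicator (cball 0 (R + norm b)) x"])
      (auto simp: Q_def G_def e_def
        intro!: emeasure_lborel_cball_finite borel_measurable_continuous_onI continuous_intros cont cont_g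
          continuous_on_compose2[OF cont_g] integrable_real_indicator)
  moreover have "(\<integral>x. Q k x \<partial>lborel) = of_real (real (Suc k)) * (cis (\<tau> k * (b \<bullet> \<xi>)) - 1) * fourier g \<xi>" for k
    using fourier_translate_diff[OF cont_g supp, where a="\<tau> k *\<^sub>R b" and \<xi>=\<xi>]
    by (simp add: Q_def e_def fourier_def mult.assoc)
  ultimately have "(\<lambda>k. of_real (real (Suc k)) * (cis (\<tau> k * (b \<bullet> \<xi>)) - 1) * fourier g \<xi>)
      \<longlonglongrightarrow> fourier G \<xi>"
    by (simp add: fourier_def e_def)
  moreover have "(\<lambda>k. of_real (real (Suc k)) * (cis (\<tau> k * (b \<bullet> \<xi>)) - 1) * fourier g \<xi>)
      \<longlonglongrightarrow> \<i> * of_real (b \<bullet> \<xi>) * fourier g \<xi>"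
    unfolding \<tau>_def by (intro tendsto_mult cis_difference_quotient_tendsto tendsto_const)
  ultimately show ?thesis
    unfolding G_def by (rule LIMSEQ_unique)
qed

definition iterated_partial :: "'a::euclidean_space \<Rightarrow> nat \<Rightarrow> ('a \<Rightarrow> 'b::real_normed_vector) \<Rightarrow> 'a \<Rightarrow> 'b"
  where "iterated_partial b k g = ((\<lambda>h x. frechet_derivative h (at x) b) ^^ k) g"

lemma iterated_partial_0 [simp]: "iterated_partial b 0 g = g"
  by (simp add: iterated_partial_def)

lemma iterated_partial_Suc:
  "iterated_partial b (Suc k) g = (\<lambda>x. frechet_derivative (iterated_partial b k g) (at x) b)"
  by (simp add: iterated_partial_def)

lemma iterated_partial_in_iter_partials:
  "g \<in> iter_partials f \<Longrightarrow> b \<in> Basis \<Longrightarrow> iterated_partial b k g \<in> iter_partials f"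
  by (induction k) (auto simp: iterated_partial_Suc intro: iter_partials.step)

context
  fixes f :: "'a::euclidean_space \<Rightarrow> complex" and R :: real
  assumes smooth: "smooth_fun f" and supp: "\<And>x. R < norm x \<Longrightarrow> f x = 0"
begin

lemma iter_partials_differentiable: "g \<in> iter_partials f \<Longrightarrow> g differentiable (at x)"
  using smooth unfolding smooth_fun_def by blast

lemma iter_partials_continuous: "g \<in> iter_partials f \<Longrightarrow> continuous_on UNIV g"
  using iter_partials_differentiable differentiable_imp_continuous_within
    continuous_at_imp_continuous_on by blast

lemma iter_partials_vanish: "g \<in> iter_partials f \<Longrightarrow> R < norm x \<Longrightarrow> g x = 0"
proof (induction arbitrary: x rule: iter_partials.induct)
  case base
  then show ?case using supp by blast
next
  case (step g b)
  have "(g has_derivative (\<lambda>_. 0)) (at x)"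
    by (rule has_derivative_transform_within_open[where f="\<lambda>_. 0" and s="{y. R < norm y}"])
       (use step in \<open>auto intro: open_Collect_less continuous_intros\<close>)
  then show ?case by (simp add: frechet_derivative_at[symmetric])
qed

lemma fourier_iterated_partial:
  assumes "b \<in> Basis"
  shows "fourier (iterated_partial b k f) \<xi> = (\<i> * of_real (b \<bullet> \<xi>)) ^ k * fourier f \<xi>"
proof (induction k)
  case (Suc k)
  have mem: "iterated_partial b k f \<in> iter_partials f" "iterated_partial b (Suc k) f \<in> iter_partials f"
    using iterated_partial_in_iter_partials[OF iter_partials.base assms] by auto
  have "fourier (iterated_partial b (Suc k) f) \<xi> = \<i> * of_real (b \<bullet> \<xi>) * fourier (iterated_partial b k f) \<xi>"
    unfolding iterated_partial_Suc
    using mem iter_partials_continuous[OF mem(2)] iter_partials_vanish[OF mem(2)]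
    by (intro fourier_directional_derivative[where R=R])
      (auto simp: iterated_partial_Suc intro: iter_partials_differentiable iter_partials_vanish)
  then show ?case using Suc by simp
qed simp

lemma fourier_decay_even:
  obtains A where "\<And>\<xi>. (1 + (norm \<xi>)\<^sup>2) ^ m * norm (fourier f \<xi>) \<le> A"
proof -
  define K where "K = (real DIM('a) + 1) ^ m"
  define A where "A = K * ((\<integral>x. norm (f x) \<partial>lborel)
    + (\<Sum>b\<in>Basis. \<integral>x. norm (iterated_partial b (2 * m) f x) \<partial>lborel))"
  have "(1 + (norm \<xi>)\<^sup>2) ^ m * norm (fourier f \<xi>) \<le> A" for \<xi> :: 'a
  proof -
    have "(norm \<xi>)\<^sup>2 = (\<Sum>b\<in>Basis. (b \<bullet> \<xi>)\<^sup>2)"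
      unfolding power2_norm_eq_inner by (subst euclidean_inner) (simp add: power2_eq_square inner_commute)
    then have "(1 + (norm \<xi>)\<^sup>2) ^ m \<le> K * (1 + (\<Sum>b\<in>Basis. \<bar>b \<bullet> \<xi>\<bar> ^ (2 * m)))"
      using one_plus_sum_power_le[of Basis "\<lambda>b. (b \<bullet> \<xi>)\<^sup>2" m] by (simp add: K_def power_mult)
    then have "(1 + (norm \<xi>)\<^sup>2) ^ m * norm (fourier f \<xi>)
        \<le> K * (1 + (\<Sum>b\<in>Basis. \<bar>b \<bullet> \<xi>\<bar> ^ (2 * m))) * norm (fourier f \<xi>)"
      by (rule mult_right_mono) simp
    also have "\<dots> = K * (norm (fourier f \<xi>) + (\<Sum>b\<in>Basis. \<bar>b \<bullet> \<xi>\<bar> ^ (2 * m) * norm (fourier f \<xi>)))"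
      by (simp add: algebra_simps sum_distrib_left sum_distrib_right)
    also have "\<dots> \<le> A"
      unfolding A_def
    proof (intro mult_left_mono add_mono sum_mono)
      show "\<bar>b \<bullet> \<xi>\<bar> ^ (2 * m) * norm (fourier f \<xi>)
          \<le> (\<integral>x. norm (iterated_partial b (2 * m) f x) \<partial>lborel)" if "b \<in> Basis" for b
        using norm_fourier_le[of "iterated_partial b (2 * m) f" \<xi>] fourier_iterated_partial[OF that]
        by (simp add: norm_mult norm_power)
    qed (simp_all add: K_def norm_fourier_le)
    finally show ?thesis .
  qed
  then show ?thesis by (rule that)
qed

lemma fourier_decay:
  obtains A where "A \<ge> 0" and "\<And>\<xi>. norm (fourier f \<xi>) \<le> A * jbr \<xi> powr (- p)"
proof -
  define m where "m = nat \<lceil>p / 2\<rceil>"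
  obtain A where A: "\<And>\<xi>. (1 + (norm \<xi>)\<^sup>2) ^ m * norm (fourier f \<xi>) \<le> A"
    using fourier_decay_even by blast
  have "jbr \<xi> powr p * norm (fourier f \<xi>) \<le> A" for \<xi>
  proof -
    have "jbr \<xi> powr p \<le> jbr \<xi> powr (2 * real m)"
      using jbr_ge_1[of \<xi>] real_nat_ceiling_ge[of "p / 2"] by (intro powr_mono) (auto simp: m_def)
    then show ?thesis
      using A[of \<xi>] by (simp add: jbr_powr_even order_trans[OF mult_right_mono])
  qed
  then show ?thesis
  proof (intro that)
    assume bound: "\<And>\<xi>. jbr \<xi> powr p * norm (fourier f \<xi>) \<le> A"
    show "0 \<le> A" using bound[of 0] by (meson mult_nonneg_nonneg norm_ge_zero powr_ge_zero order_trans)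
    have "0 < jbr \<xi> powr p" for \<xi> :: 'a using jbr_ge_1[of \<xi>] by simp
    then show "norm (fourier f \<xi>) \<le> A * jbr \<xi> powr (- p)" for \<xi>
      using bound[of \<xi>] by (simp add: powr_minus divide_inverse[symmetric] pos_le_divide_eq mult.commute)
  qed
qed

end

section \<open>Weighted L^q bounds\<close>

lemma nn_integral_inverse_one_plus_square_finite:
  "(\<integral>\<^sup>+x. ennreal (1 / (1 + x\<^sup>2)) \<partial>lborel) < \<infinity>"
proof -
  have "integrable lborel (\<lambda>x::real. 1 / (1 + x\<^sup>2))"
    using integrable_inverse_1_plus_square
    by (simp add: set_integrable_def einterval_def divide_inverse)
  then show ?thesis
    by (simp add: integrable_iff_bounded abs_of_nonneg add_pos_nonneg)
qed

lemma nn_integral_jbr_powr_finite: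
  assumes "2 * real DIM('a) \<le> p"
  shows "(\<integral>\<^sup>+\<xi>. ennreal (jbr (\<xi> :: 'a::euclidean_space) powr (- p)) \<partial>lborel) < \<infinity>"
proof -
  have pointwise: "ennreal (jbr \<xi> powr (- p)) \<le> (\<Prod>b\<in>Basis. ennreal (1 / (1 + (\<xi> \<bullet> b)\<^sup>2)))"
    for \<xi> :: 'a
  proof -
    let ?w = "1 + (norm \<xi>)\<^sup>2"
    have "(\<Prod>b\<in>Basis. 1 + (\<xi> \<bullet> b)\<^sup>2) \<le> ?w ^ DIM('a)"
    proof (rule prod_le_power)
      show "0 \<le> 1 + (\<xi> \<bullet> b)\<^sup>2 \<and> 1 + (\<xi> \<bullet> b)\<^sup>2 \<le> ?w" if "b \<in> Basis" for b
        using Basis_le_norm[OF that, of \<xi>] by (simp add: inner_commute) (metis abs_ge_zero power2_abs power_mono)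
    qed simp_all
    moreover have "0 < (\<Prod>b\<in>Basis. 1 + (\<xi> \<bullet> b)\<^sup>2)"
      by (intro prod_pos) (simp add: add_pos_nonneg)
    ultimately have "1 / ?w ^ DIM('a) \<le> (\<Prod>b\<in>Basis. 1 / (1 + (\<xi> \<bullet> b)\<^sup>2))"
      by (simp add: prod_dividef divide_left_mono)
    moreover have "jbr \<xi> powr (- p) \<le> 1 / ?w ^ DIM('a)"
    proof -
      have "jbr \<xi> powr (- p) \<le> jbr \<xi> powr (- (2 * real DIM('a)))"
        using assms jbr_ge_1[of \<xi>] by (intro powr_mono) auto
      then show ?thesis
        by (simp add: powr_minus_divide jbr_powr_even[of \<xi> "DIM('a)", simplified])
    qed
    ultimately have "jbr \<xi> powr (- p) \<le> (\<Prod>b\<in>Basis. 1 / (1 + (\<xi> \<bullet> b)\<^sup>2))"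
      by linarith
    then show ?thesis
      by (subst prod_ennreal) (auto intro: ennreal_leI)
  qed
  have "(\<integral>\<^sup>+\<xi>. ennreal (jbr (\<xi> :: 'a) powr (- p)) \<partial>lborel)
      \<le> (\<integral>\<^sup>+\<xi>. (\<Prod>b\<in>Basis. ennreal (1 / (1 + ((\<xi> :: 'a) \<bullet> b)\<^sup>2))) \<partial>lborel)"
    by (intro nn_integral_mono pointwise)
  also have "\<dots> = (\<Prod>b\<in>(Basis :: 'a set). (\<integral>\<^sup>+t. ennreal (1 / (1 + t\<^sup>2)) \<partial>lborel))"
    by (rule nn_integral_lborel_prod) auto
  also have "\<dots> < \<infinity>"
    using nn_integral_inverse_one_plus_square_finite
    by (simp add: less_top[symmetric] power_eq_top_ennreal)
  finally show ?thesis .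
qed

lemma Lq_norm_le_sum:
  fixes F :: "'a::euclidean_space \<Rightarrow> 'b::real_normed_vector"
  assumes "0 < q" and "0 \<le> G" and "0 \<le> I"
    and pointwise: "\<And>\<xi>. norm (F \<xi>) \<le> G * (u \<xi> + v \<xi>)"
    and "\<And>\<xi>. 0 \<le> u \<xi>" and "\<And>\<xi>. 0 \<le> v \<xi>"
    and [measurable]: "u \<in> borel_measurable borel" "v \<in> borel_measurable borel"
    and int_u: "(\<integral>\<^sup>+\<xi>. ennreal (u \<xi> powr q) \<partial>lborel) \<le> ennreal I"
    and int_v: "(\<integral>\<^sup>+\<xi>. ennreal (v \<xi> powr q) \<partial>lborel) \<le> ennreal I"
  shows "Lq_norm q F \<le> ennreal (G * (2 powr q * (2 * I)) powr (1 / q))"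
proof -
  define c where "c = G powr q * 2 powr q"
  define J where "J = (\<integral>\<^sup>+\<xi>. ennreal (norm (F \<xi>) powr q) \<partial>lborel)"
  have "0 \<le> c" by (simp add: c_def)
  have pointwise_powr: "ennreal (norm (F \<xi>) powr q)
      \<le> ennreal c * (ennreal (u \<xi> powr q) + ennreal (v \<xi> powr q))" for \<xi>
  proof -
    have "norm (F \<xi>) powr q \<le> G powr q * (u \<xi> + v \<xi>) powr q"
      using pointwise[of \<xi>] assms by (simp add: powr_mono2 powr_mult[symmetric] add_nonneg_nonneg)
    also have "\<dots> \<le> c * (u \<xi> powr q + v \<xi> powr q)"
      using assms powr_add_le[of "u \<xi>" "v \<xi>" q] by (simp add: c_def mult.assoc mult_left_mono)
    moreover have "ennreal c * (ennreal (u \<xi> powr q) + ennreal (v \<xi> powr q))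
        = ennreal (c * (u \<xi> powr q + v \<xi> powr q))"
      using \<open>0 \<le> c\<close> by (simp add: ennreal_mult)
    ultimately show ?thesis by (simp add: ennreal_leI)
  qed
  have "J \<le> (\<integral>\<^sup>+\<xi>. ennreal c * (ennreal (u \<xi> powr q) + ennreal (v \<xi> powr q)) \<partial>lborel)"
    unfolding J_def by (intro nn_integral_mono pointwise_powr)
  also have "\<dots> = ennreal c * ((\<integral>\<^sup>+\<xi>. ennreal (u \<xi> powr q) \<partial>lborel) + (\<integral>\<^sup>+\<xi>. ennreal (v \<xi> powr q) \<partial>lborel))"
    by (simp add: nn_integral_cmult nn_integral_add)
  also have "\<dots> \<le> ennreal c * (ennreal I + ennreal I)"
    by (intro mult_left_mono add_mono int_u int_v) auto
  also have "\<dots> = ennreal (c * (2 * I))"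
    using ennreal_plus[of I I] ennreal_mult[of c "I + I"] \<open>0 \<le> c\<close> \<open>0 \<le> I\<close> by (simp only: mult_2)
  finally have J: "J \<le> ennreal (c * (2 * I))" .
  then have "J \<noteq> \<infinity>"
    by (metis ennreal_neq_top infinity_ennreal_def neq_top_trans)
  have "enn2real J powr (1 / q) \<le> (c * (2 * I)) powr (1 / q)"
    using J \<open>0 \<le> c\<close> \<open>0 \<le> I\<close> \<open>0 < q\<close> by (intro powr_mono2 enn2real_leI) auto
  also have "\<dots> = (G powr q) powr (1 / q) * (2 powr q * (2 * I)) powr (1 / q)"
    using assms by (simp add: c_def mult.assoc powr_mult)
  also have "(G powr q) powr (1 / q) = G"
    using assms by (simp add: powr_powr)
  finally show ?thesis
    unfolding Lq_norm_def Let_def J_def[symmetric] using \<open>J \<noteq> \<infinity>\<close> by (simp add: ennreal_leI)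
qed

lemma Lq_norm_le_translated_weights:
  fixes q p :: real
  assumes "0 < q" and "2 * real DIM('a) \<le> p * q"
  obtains L where "0 \<le> L"
    and "\<And>(F :: 'a::euclidean_space \<Rightarrow> complex) G \<theta>. 0 \<le> G \<Longrightarrow>
      (\<And>\<xi>. norm (F \<xi>) \<le> G * (jbr (\<xi> - \<theta>) powr (- p) + jbr \<xi> powr (- p))) \<Longrightarrow>
      Lq_norm q F \<le> ennreal (G * L)"
proof -
  define I where "I = enn2real (\<integral>\<^sup>+\<xi>. ennreal (jbr (\<xi> :: 'a) powr (- (p * q))) \<partial>lborel)"
  have weight: "(\<integral>\<^sup>+\<xi>. ennreal (jbr (\<xi> :: 'a) powr (- (p * q))) \<partial>lborel) = ennreal I"
    using nn_integral_jbr_powr_finite[OF assms(2)] by (simp add: I_def less_top)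
  have power: "(jbr \<xi> powr (- p)) powr q = jbr \<xi> powr (- (p * q))" for \<xi> :: 'a
    by (simp add: powr_powr)
  show ?thesis
  proof (rule that)
    show "0 \<le> (2 powr q * (2 * I)) powr (1 / q)" by simp
    fix F :: "'a \<Rightarrow> complex" and G and \<theta> :: 'a
    assume "0 \<le> G" and pointwise: "\<And>\<xi>. norm (F \<xi>) \<le> G * (jbr (\<xi> - \<theta>) powr (- p) + jbr \<xi> powr (- p))"
    have int_u: "(\<integral>\<^sup>+\<xi>. ennreal ((jbr (\<xi> - \<theta>) powr (- p)) powr q) \<partial>lborel) \<le> ennreal I"
      using lborel_nn_integral_translate[of "\<lambda>\<xi>. ennreal (jbr \<xi> powr (- (p * q)))" "- \<theta>"] weight
      by (simp add: power)
    have int_v: "(\<integral>\<^sup>+\<xi>. ennreal ((jbr (\<xi> :: 'a) powr (- p)) powr q) \<partial>lborel) \<le> ennreal I"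
      using weight by (simp only: power order_refl)
    show "Lq_norm q F \<le> ennreal (G * (2 powr q * (2 * I)) powr (1 / q))"
    proof (rule Lq_norm_le_sum[OF \<open>0 < q\<close> \<open>0 \<le> G\<close> _ pointwise _ _ _ _ int_u int_v])
      show "0 \<le> I" by (simp add: I_def)
      show "(\<lambda>\<xi>. jbr (\<xi> - \<theta>) powr (- p)) \<in> borel_measurable borel" by measurable
      show "(\<lambda>\<xi>. jbr \<xi> powr (- p)) \<in> borel_measurable borel" by measurable
    qed simp_all
  qed
qed

lemma norm_mult_translate_diff_le:
  fixes f g :: "'a::real_normed_vector \<Rightarrow> 'b::real_normed_div_algebra"
  assumes "0 \<le> A" and "0 \<le> B"
    and decay_f: "\<And>\<xi>. norm (f \<xi>) \<le> A * w \<xi>" and decay_g: "\<And>\<xi>. norm (g \<xi>) \<le> A * w \<xi>"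
    and w_nonneg: "\<And>\<xi>. 0 \<le> w \<xi>" and w_le_1: "\<And>\<xi>. w \<xi> \<le> 1"
    and lip_f: "\<And>\<xi>. norm (f (\<xi> - \<theta>) - f \<xi>) \<le> B * norm \<theta>"
    and lip_g: "\<And>\<xi>. norm (g (\<xi> - \<theta>) - g \<xi>) \<le> B * norm \<theta>"
  shows "norm (f (\<xi> - \<theta>) * g (\<xi> - \<theta>) - f \<xi> * g \<xi>)
    \<le> A * max A B * min (norm \<theta>) 1 * (w (\<xi> - \<theta>) + w \<xi>)"
proof -
  let ?\<eta> = "\<xi> - \<theta>"
  have bounded_g: "norm (g \<zeta>) \<le> A" for \<zeta>
    using order_trans[OF decay_g[of \<zeta>] mult_left_mono[OF w_le_1[of \<zeta>] \<open>0 \<le> A\<close>]] by simp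
  have lipschitz_bound: "norm (f ?\<eta> * g ?\<eta> - f \<xi> * g \<xi>) \<le> A * B * norm \<theta> * (w ?\<eta> + w \<xi>)"
  proof -
    have "f ?\<eta> * g ?\<eta> - f \<xi> * g \<xi> = f ?\<eta> * (g ?\<eta> - g \<xi>) + (f ?\<eta> - f \<xi>) * g \<xi>"
      by (simp add: algebra_simps)
    then have "norm (f ?\<eta> * g ?\<eta> - f \<xi> * g \<xi>)
        \<le> norm (f ?\<eta>) * norm (g ?\<eta> - g \<xi>) + norm (f ?\<eta> - f \<xi>) * norm (g \<xi>)"
      by (metis norm_mult norm_triangle_ineq)
    also have "\<dots> \<le> (A * w ?\<eta>) * (B * norm \<theta>) + (B * norm \<theta>) * (A * w \<xi>)"
      by (intro add_mono mult_mono decay_f decay_g lip_f lip_g) (auto simp: assms)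
    finally show ?thesis by (simp add: algebra_simps)
  qed
  have decay_bound: "norm (f ?\<eta> * g ?\<eta> - f \<xi> * g \<xi>) \<le> A * A * (w ?\<eta> + w \<xi>)"
  proof -
    have "norm (f ?\<eta> * g ?\<eta> - f \<xi> * g \<xi>) \<le> norm (f ?\<eta>) * norm (g ?\<eta>) + norm (f \<xi>) * norm (g \<xi>)"
      by (metis norm_mult norm_triangle_ineq4)
    also have "\<dots> \<le> (A * w ?\<eta>) * A + (A * w \<xi>) * A"
      by (intro add_mono mult_mono decay_f bounded_g) (auto simp: assms)
    finally show ?thesis by (simp add: algebra_simps)
  qed
  have "0 \<le> w ?\<eta> + w \<xi>"
    by (simp add: add_nonneg_nonneg w_nonneg)
  show ?thesis
  proof (cases "norm \<theta> \<le> 1")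
    case True
    have "A * B * norm \<theta> * (w ?\<eta> + w \<xi>) \<le> A * max A B * norm \<theta> * (w ?\<eta> + w \<xi>)"
      using assms \<open>0 \<le> w ?\<eta> + w \<xi>\<close> by (intro mult_right_mono mult_left_mono) auto
    with lipschitz_bound True show ?thesis by (simp add: min_def)
  next
    case False
    have "A * A * (w ?\<eta> + w \<xi>) \<le> A * max A B * (w ?\<eta> + w \<xi>)"
      using assms \<open>0 \<le> w ?\<eta> + w \<xi>\<close> by (intro mult_right_mono mult_left_mono) auto
    with decay_bound False show ?thesis by (simp add: min_def)
  qed
qed

lemma norm_jbr_powr_mult_translate_diff_le:
  fixes f g :: "'a::real_normed_vector \<Rightarrow> complex"
  assumes "0 \<le> A" and "0 \<le> B" and "0 \<le> s" and "0 \<le> p"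
    and decay_f: "\<And>\<xi>. norm (f \<xi>) \<le> A * jbr \<xi> powr (- (s + p))"
    and decay_g: "\<And>\<xi>. norm (g \<xi>) \<le> A * jbr \<xi> powr (- (s + p))"
    and lip_f: "\<And>\<xi>. norm (f (\<xi> - \<theta>) - f \<xi>) \<le> B * norm \<theta>"
    and lip_g: "\<And>\<xi>. norm (g (\<xi> - \<theta>) - g \<xi>) \<le> B * norm \<theta>"
  shows "norm (complex_of_real (jbr \<xi> powr s) * (f (\<xi> - \<theta>) * g (\<xi> - \<theta>) - f \<xi> * g \<xi>))
    \<le> A * max A B * min (norm \<theta>) 1 * (2 powr (s / 2) * jbr \<theta> powr s)
      * (jbr (\<xi> - \<theta>) powr (- p) + jbr \<xi> powr (- p))"
proof -
  have "jbr \<zeta> powr (- (s + p)) \<le> 1" for \<zeta> :: 'a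
    using powr_mono[of "- (s + p)" 0 "jbr \<zeta>"] jbr_ge_1[of \<zeta>] assms by simp
  then have "norm (f (\<xi> - \<theta>) * g (\<xi> - \<theta>) - f \<xi> * g \<xi>)
      \<le> A * max A B * min (norm \<theta>) 1 * (jbr (\<xi> - \<theta>) powr (- (s + p)) + jbr \<xi> powr (- (s + p)))"
    using assms by (intro norm_mult_translate_diff_le) auto
  then have "norm (complex_of_real (jbr \<xi> powr s) * (f (\<xi> - \<theta>) * g (\<xi> - \<theta>) - f \<xi> * g \<xi>))
      \<le> A * max A B * min (norm \<theta>) 1 * (jbr \<xi> powr s * (jbr (\<xi> - \<theta>) powr (- (s + p)) + jbr \<xi> powr (- (s + p))))"
    by (simp add: norm_mult mult_left_mono mult.left_commute)
  also have "\<dots> \<le> A * max A B * min (norm \<theta>) 1 * (2 powr (s / 2) * jbr \<theta> powr s)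
      * (jbr (\<xi> - \<theta>) powr (- p) + jbr \<xi> powr (- p))"
    using jbr_powr_mult_translated_weights_le[OF \<open>0 \<le> s\<close>, where \<xi>=\<xi> and \<theta>=\<theta> and p="s + p"] assms
    by (simp add: mult.assoc mult_left_mono)
  finally show ?thesis .
qed

lemma Lq_norm_weighted_fourier_conv_translate_diff_le:
  fixes f g :: "'a::euclidean_space \<Rightarrow> complex"
  assumes "0 < q" and "0 \<le> s" and "0 \<le> R"
    and smooth_f: "smooth_fun f" and supp_f: "\<And>x. R < norm x \<Longrightarrow> f x = 0"
    and smooth_g: "smooth_fun g" and supp_g: "\<And>x. R < norm x \<Longrightarrow> g x = 0"
  obtains K where "0 \<le> K"
    and "\<And>\<theta>. Lq_norm q (\<lambda>\<xi>. complex_of_real (jbr \<xi> powr s) *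
          (fourier (conv f g) (\<xi> - \<theta>) - fourier (conv f g) \<xi>))
        \<le> ennreal (K * (min (norm \<theta>) 1 * jbr \<theta> powr s))"
proof -
  define p where "p = 2 * real DIM('a) / q"
  have "0 \<le> p" "p * q = 2 * real DIM('a)"
    using \<open>0 < q\<close> by (simp_all add: p_def)
  obtain L where "0 \<le> L" and weights: "\<And>(F :: 'a \<Rightarrow> complex) G \<theta>. 0 \<le> G \<Longrightarrow>
      (\<And>\<xi>. norm (F \<xi>) \<le> G * (jbr (\<xi> - \<theta>) powr (- p) + jbr \<xi> powr (- p))) \<Longrightarrow>
      Lq_norm q F \<le> ennreal (G * L)"
    using Lq_norm_le_translated_weights[OF \<open>0 < q\<close>, of p] \<open>p * q = _\<close> by auto
  have cont_f: "continuous_on UNIV f" and cont_g: "continuous_on UNIV g"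
    using iter_partials_continuous[OF smooth_f supp_f iter_partials.base]
      iter_partials_continuous[OF smooth_g supp_g iter_partials.base] by auto
  obtain Af where "0 \<le> Af" and Af: "\<And>\<xi>. norm (fourier f \<xi>) \<le> Af * jbr \<xi> powr (- (s + p))"
    using fourier_decay[OF smooth_f supp_f] by blast
  obtain Ag where "0 \<le> Ag" and Ag: "\<And>\<xi>. norm (fourier g \<xi>) \<le> Ag * jbr \<xi> powr (- (s + p))"
    using fourier_decay[OF smooth_g supp_g] by blast
  define A where "A = max Af Ag"
  define B where "B = R * max (\<integral>x. norm (f x) \<partial>lborel) (\<integral>x. norm (g x) \<partial>lborel)"
  have "0 \<le> A" "0 \<le> B"
    using \<open>0 \<le> Af\<close> \<open>0 \<le> R\<close> Bochner_Integration.integral_nonneg[of lborel "\<lambda>x. norm (f x)"]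
    by (auto simp: A_def B_def le_max_iff_disj)
  have decay: "norm (fourier h \<xi>) \<le> A * jbr \<xi> powr (- (s + p))" if "h = f \<or> h = g" for h \<xi>
    using that Af[of \<xi>] Ag[of \<xi>] mult_right_mono[of _ A "jbr \<xi> powr (- (s + p))"]
    by (auto simp: A_def intro: order_trans)
  have lipschitz: "norm (fourier h (\<xi> - \<theta>) - fourier h \<xi>) \<le> B * norm \<theta>" if "h = f \<or> h = g" for h \<xi> \<theta>
  proof -
    have le_max: "(\<integral>x. norm (h x) \<partial>lborel) \<le> max (\<integral>x. norm (f x) \<partial>lborel) (\<integral>x. norm (g x) \<partial>lborel)"
      using that by auto
    have "R * norm \<theta> * (\<integral>x. norm (h x) \<partial>lborel) \<le> B * norm \<theta>"
      using mult_left_mono[OF le_max mult_nonneg_nonneg[OF \<open>0 \<le> R\<close> norm_ge_zero[of \<theta>]]]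
      by (simp add: B_def mult_ac)
    moreover have "norm (fourier h (\<xi> - \<theta>) - fourier h \<xi>) \<le> R * norm \<theta> * (\<integral>x. norm (h x) \<partial>lborel)"
      using that norm_fourier_translate_diff_le[OF cont_f supp_f \<open>0 \<le> R\<close>]
        norm_fourier_translate_diff_le[OF cont_g supp_g \<open>0 \<le> R\<close>] by auto
    ultimately show ?thesis by linarith
  qed
  have conv: "fourier (conv f g) \<xi> = fourier f \<xi> * fourier g \<xi>" for \<xi>
    using fourier_conv[OF cont_f cont_g, of R] supp_f supp_g by blast
  show ?thesis
  proof (rule that)
    show "0 \<le> A * max A B * 2 powr (s / 2) * L"
      using \<open>0 \<le> A\<close> \<open>0 \<le> L\<close> by simp
    fix \<theta> :: 'a
    define G where "G = A * max A B * min (norm \<theta>) 1 * (2 powr (s / 2) * jbr \<theta> powr s)"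
    have G_nonneg: "0 \<le> G"
      using \<open>0 \<le> A\<close> by (simp add: G_def)
    have pointwise: "norm (complex_of_real (jbr \<xi> powr s) * (fourier (conv f g) (\<xi> - \<theta>) - fourier (conv f g) \<xi>))
        \<le> G * (jbr (\<xi> - \<theta>) powr (- p) + jbr \<xi> powr (- p))" for \<xi>
      unfolding conv G_def using \<open>0 \<le> A\<close> \<open>0 \<le> B\<close> \<open>0 \<le> s\<close> \<open>0 \<le> p\<close>
      by (intro norm_jbr_powr_mult_translate_diff_le decay lipschitz) auto
    show "Lq_norm q (\<lambda>\<xi>. complex_of_real (jbr \<xi> powr s) *
          (fourier (conv f g) (\<xi> - \<theta>) - fourier (conv f g) \<xi>))
        \<le> ennreal (A * max A B * 2 powr (s / 2) * L * (min (norm \<theta>) 1 * jbr \<theta> powr s))"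
      using weights[OF G_nonneg pointwise] by (simp add: G_def mult_ac)
  qed
qed

lemma Sup_norm_cis_minus_one_ge:
  fixes \<theta> :: "'a::real_inner"
  assumes "0 < R" and "norm \<theta> \<le> 1"
  shows "min R 1 * norm \<theta> / 2 \<le> (SUP t\<in>cball 0 R. cmod (cis (\<theta> \<bullet> t) - 1))"
proof -
  define r where "r = min R 1"
  define t where "t = (r / norm \<theta>) *\<^sub>R \<theta>"
  have r: "0 < r" "r \<le> R" "r \<le> 1" using assms by (auto simp: r_def)
  have "\<theta> \<bullet> t = r * norm \<theta>"
    by (simp add: t_def power2_norm_eq_inner[symmetric] power2_eq_square)
  moreover have "r * norm \<theta> \<le> 1"
    using r assms by (simp add: mult_le_one)
  ultimately have "r * norm \<theta> / 2 \<le> cmod (cis (\<theta> \<bullet> t) - 1)"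
    using norm_cis_minus_one_ge[of "r * norm \<theta>"] r by simp
  also have "\<dots> \<le> (SUP t\<in>cball 0 R. cmod (cis (\<theta> \<bullet> t) - 1))"
  proof (rule cSUP_upper)
    show "t \<in> cball 0 R"
      using r by (cases "\<theta> = 0") (auto simp: t_def)
    have "cmod (cis a - 1) \<le> 2" for a
      using norm_triangle_ineq4[of "cis a" 1] by simp
    then show "bdd_above ((\<lambda>t. cmod (cis (\<theta> \<bullet> t) - 1)) ` cball 0 R)"
      by (rule bdd_aboveI2)
  qed
  finally show ?thesis by (simp add: r_def)
qed

lemma norm_le_powr_mult_Sup_powr:
  fixes \<theta> :: "'a::real_inner"
  assumes "0 < R" and "a < 1" and "\<theta> \<noteq> 0" and "norm \<theta> \<le> 1"
  shows "norm \<theta> \<le> (2 / min R 1) powr (1 - a)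
    * (norm \<theta> powr a * (SUP t\<in>cball 0 R. cmod (cis (\<theta> \<bullet> t) - 1)) powr (1 - a))"
proof -
  define r where "r = min R 1"
  define S where "S = (SUP t\<in>cball 0 R. cmod (cis (\<theta> \<bullet> t) - 1))"
  have "0 < r" using assms by (simp add: r_def)
  have "(r / 2) powr (1 - a) * norm \<theta> powr (1 - a) \<le> S powr (1 - a)"
    using Sup_norm_cis_minus_one_ge[OF assms(1,4)] assms \<open>0 < r\<close>
    by (simp add: S_def r_def powr_mult[symmetric] powr_mono2)
  then have "norm \<theta> powr a * ((r / 2) powr (1 - a) * norm \<theta> powr (1 - a)) \<le> norm \<theta> powr a * S powr (1 - a)"
    by (rule mult_left_mono) simp
  moreover have "norm \<theta> powr a * ((r / 2) powr (1 - a) * norm \<theta> powr (1 - a)) = (r / 2) powr (1 - a) * norm \<theta>"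
    using assms by (simp add: mult.left_commute powr_add[symmetric])
  ultimately have "(r / 2) powr (1 - a) * norm \<theta> \<le> norm \<theta> powr a * S powr (1 - a)"
    by simp
  then show ?thesis
    using \<open>0 < r\<close> by (simp add: r_def S_def powr_divide field_simps)
qed

lemma min_norm_mult_jbr_powr_le:
  fixes R a s :: real
  assumes "0 < R" and "0 < a" and "a < 1" and "0 \<le> s"
  obtains c where "0 < c"
    and "\<And>\<theta> :: 'a::real_inner. min (norm \<theta>) 1 * jbr \<theta> powr s
      \<le> c * (norm \<theta> powr a * (SUP t\<in>cball 0 R. cmod (cis (\<theta> \<bullet> t) - 1)) powr (1 - a) + norm \<theta> powr s)"
proof -
  define c where "c = 2 powr (s / 2) * (1 + (2 / min R 1) powr (1 - a))"
  have "0 < c" using assms by (simp add: c_def add_pos_nonneg)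
  moreover have "min (norm \<theta>) 1 * jbr \<theta> powr s
      \<le> c * (norm \<theta> powr a * (SUP t\<in>cball 0 R. cmod (cis (\<theta> \<bullet> t) - 1)) powr (1 - a) + norm \<theta> powr s)"
    for \<theta> :: 'a
  proof -
    define X where "X = norm \<theta> powr a * (SUP t\<in>cball 0 R. cmod (cis (\<theta> \<bullet> t) - 1)) powr (1 - a)"
    have "0 \<le> X" by (simp add: X_def)
    consider "\<theta> = 0" | "1 \<le> norm \<theta>" | "\<theta> \<noteq> 0" "norm \<theta> < 1" by fastforce
    then have "min (norm \<theta>) 1 * jbr \<theta> powr s \<le> c * (X + norm \<theta> powr s)"
    proof cases
      case 2
      have "2 powr (s / 2) \<le> c" by (simp add: c_def)
      then have "jbr \<theta> powr s \<le> c * norm \<theta> powr s"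
        using jbr_powr_le_norm_powr[OF 2 \<open>0 \<le> s\<close>] mult_right_mono[of "2 powr (s / 2)" c "norm \<theta> powr s"]
        by simp
      moreover have "0 \<le> c * X" using \<open>0 < c\<close> \<open>0 \<le> X\<close> by simp
      ultimately show ?thesis using 2 by (simp add: distrib_left)
    next
      case 3
      have "jbr \<theta> powr s \<le> 2 powr (s / 2)"
        using 3 \<open>0 \<le> s\<close> power_le_one[of "norm \<theta>" 2] by (simp add: jbr_powr powr_mono2)
      moreover have "norm \<theta> \<le> (2 / min R 1) powr (1 - a) * X"
        unfolding X_def using 3 assms by (intro norm_le_powr_mult_Sup_powr) auto
      ultimately have "jbr \<theta> powr s * norm \<theta> \<le> 2 powr (s / 2) * ((2 / min R 1) powr (1 - a) * X)"
        by (intro mult_mono) auto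
      also have "\<dots> \<le> c * (X + norm \<theta> powr s)"
        using \<open>0 \<le> X\<close> by (simp add: c_def algebra_simps mult_left_mono)
      finally show ?thesis using 3 by (simp add: mult.commute)
    qed (use \<open>0 < c\<close> \<open>0 \<le> X\<close> in simp)
    then show ?thesis by (simp add: X_def)
  qed
  ultimately show ?thesis by (rule that)
qed

theorem mainTheorem12:
  fixes q s R :: real
    and psi1 psi2 :: "real ^ 'n \<Rightarrow> complex"
  defines "q' \<equiv> q / (q - 1)"
  defines "n \<equiv> real CARD('n)"
  defines "psi \<equiv> conv psi1 psi2"
  assumes "1 < q" and "q \<le> 2"
    and "n / q' < s" and "s < n / q' + 1"
    and "R > 0"
    and "smooth_fun psi1" and "smooth_fun psi2"
    and "\<forall>x. norm x > R \<longrightarrow> psi1 x = 0"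
    and "\<forall>x. norm x > R \<longrightarrow> psi2 x = 0"
  shows "\<exists>C>0. \<forall>\<theta> :: real ^ 'n.
           Lq_norm q (\<lambda>\<xi>. complex_of_real (jbr \<xi> powr s) *
                             (fourier psi (\<xi> - \<theta>) - fourier psi \<xi>))
           \<le> ennreal (C * (norm \<theta> powr (s - n / q') *
                 (SUP t\<in>cball 0 R. cmod (cis (\<theta> \<bullet> t) - 1)) powr (1 - (s - n / q'))
                 + norm \<theta> powr s))"
proof -
  have "0 < n / q'"
    using \<open>1 < q\<close> by (simp add: n_def q'_def)
  then have "0 \<le> s" and "0 < s - n / q'" and "s - n / q' < 1"
    using \<open>n / q' < s\<close> \<open>s < n / q' + 1\<close> by auto
  obtain K where "0 \<le> K" and K: "\<And>\<theta>. Lq_norm q (\<lambda>\<xi>. complex_of_real (jbr \<xi> powr s) *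
        (fourier psi (\<xi> - \<theta>) - fourier psi \<xi>)) \<le> ennreal (K * (min (norm \<theta>) 1 * jbr \<theta> powr s))"
    using Lq_norm_weighted_fourier_conv_translate_diff_le[of q s R psi1 psi2] \<open>0 \<le> s\<close> assms
    unfolding psi_def by auto
  define S where "S \<theta> = norm \<theta> powr (s - n / q') *
    (SUP t\<in>cball 0 R. cmod (cis (\<theta> \<bullet> t) - 1)) powr (1 - (s - n / q')) + norm \<theta> powr s"
    for \<theta> :: "real ^ 'n"
  obtain c where "0 < c" and c: "\<And>\<theta>. min (norm \<theta>) 1 * jbr \<theta> powr s \<le> c * S \<theta>"
    using min_norm_mult_jbr_powr_le[OF \<open>R > 0\<close> \<open>0 < s - n / q'\<close> \<open>s - n / q' < 1\<close> \<open>0 \<le> s\<close>]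
    unfolding S_def by blast
  have S_nonneg: "0 \<le> S \<theta>" for \<theta>
    by (simp add: S_def)
  have bound: "K * (min (norm \<theta>) 1 * jbr \<theta> powr s) \<le> (K * c + 1) * S \<theta>" for \<theta>
    using mult_left_mono[OF c[of \<theta>] \<open>0 \<le> K\<close>] S_nonneg[of \<theta>] by (simp add: algebra_simps)
  show ?thesis
  proof (intro exI[of _ "K * c + 1"] conjI allI)
    show "0 < K * c + 1"
      using \<open>0 \<le> K\<close> \<open>0 < c\<close> by (simp add: add_nonneg_pos)
  qed (use order_trans[OF K ennreal_leI[OF bound]] in \<open>simp add: S_def\<close>)
qed

end
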